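(* Let $z_1,\dots,z_n\in\mathbb{Q}[\mathbf{i}]$ (not necessarily distinct) be nonzero and satisfy $|z_j|=|z_k|$ for all $j,k\in[n]$. Write $n=2^s m$ with $s\in\mathbb{Z}_{\ge0}$ and $m$ odd. Then there exists $j\in\{0,1,\dots,s\}$ such that $\sum_{k=1}^n z_k^{2^j}\neq 0$.
   Context: $\mathbb{Q}[\mathbf{i}]=\{x+y\mathbf{i}: x,y\in\mathbb{Q}\}$, $[n]=\{1,\dots,n\}$. (In the paper's notation the quantity $\sum_k z_k^{p}$ is the complex moment $M_p(S)$ of $S=\{z_1,\dots,z_n\}$.) *)

theory Defs
  imports "HOL-Analysis.Analysis"
begin

definition gauss_rat :: "complex set" where
  "gauss_rat = {z. Re z \<in> \<rat> \<and> Im z \<in> \<rat>}"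

end

theory Submission
  imports Defs
begin

text \<open>
  Work in the ring of Gaussian rationals with odd denominator. There a Gaussian rational of
  modulus 1 is congruent to 1 or i modulo 2, and squaring turns a congruence x = y mod 2^e
  with e >= 1 into x^2 = y^2 mod 2^(e+1). Hence, after dividing by z_1, the sum of the 2^j-th
  powers is congruent modulo 2^(j+1) to r + i^(2^j) t, where r and t count the terms congruent
  to 1 and to i. Vanishing for j = 0 makes r and t even, vanishing for j = 1 then gives
  4 | r + t = n, and for j >= 2 we have i^(2^j) = 1; so vanishing for all j <= s forces
  2^(s+1) | n, contradicting n = 2^s m with m odd.
\<close>

text \<open>\<open>pow2_dvd e x\<close>: \<open>2 ^ e\<close> divides \<open>x\<close> in the ring of Gaussian rationals with odd denominator.\<close>
definition pow2_dvd :: "nat \<Rightarrow> complex \<Rightarrow> bool" where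
  "pow2_dvd e x \<longleftrightarrow>
     (\<exists>c a b :: int. odd c \<and> of_int c * x = 2 ^ e * (of_int a + \<i> * of_int b))"

lemma pow2_dvd_gauss_int_iff:
  "pow2_dvd e (of_int a + \<i> * of_int b) \<longleftrightarrow> 2 ^ e dvd a \<and> 2 ^ e dvd b"
proof
  assume "pow2_dvd e (of_int a + \<i> * of_int b)"
  then obtain c a' b' where "odd c"
    and eq: "of_int c * (of_int a + \<i> * of_int b) = 2 ^ e * (of_int a' + \<i> * of_int b')"
    unfolding pow2_dvd_def by blast
  from eq have "real_of_int (c * a) = of_int (2 ^ e * a')" "real_of_int (c * b) = of_int (2 ^ e * b')"
    by (simp_all add: complex_eq_iff)
  then have "c * a = 2 ^ e * a'" "c * b = 2 ^ e * b'"
    by (simp_all only: of_int_eq_iff)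
  moreover have "coprime (2 ^ e) c"
    using \<open>odd c\<close> by simp
  ultimately show "2 ^ e dvd a \<and> 2 ^ e dvd b"
    by (metis coprime_dvd_mult_right_iff dvd_triv_left)
next
  assume "2 ^ e dvd a \<and> 2 ^ e dvd b"
  then obtain a' b' where "a = 2 ^ e * a'" "b = 2 ^ e * b'"
    unfolding dvd_def by blast
  then show "pow2_dvd e (of_int a + \<i> * of_int b)"
    unfolding pow2_dvd_def by (intro exI[of _ 1] exI[of _ a'] exI[of _ b']) (simp add: algebra_simps)
qed

lemma pow2_dvd_add:
  assumes "pow2_dvd e x" "pow2_dvd e y"
  shows "pow2_dvd e (x + y)"
proof -
  from assms obtain c a b c' a' b' where "odd c" "odd c'"
    and x: "of_int c * x = 2 ^ e * (of_int a + \<i> * of_int b)"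
    and y: "of_int c' * y = 2 ^ e * (of_int a' + \<i> * of_int b')"
    unfolding pow2_dvd_def by blast
  have odd: "odd (c * c')"
    using \<open>odd c\<close> \<open>odd c'\<close> by simp
  have "of_int (c * c') * (x + y) = of_int c' * (of_int c * x) + of_int c * (of_int c' * y)"
    by (simp add: algebra_simps)
  also have "\<dots> = 2 ^ e * (of_int (c' * a + c * a') + \<i> * of_int (c' * b + c * b'))"
    unfolding x y by (simp add: algebra_simps)
  finally show ?thesis
    unfolding pow2_dvd_def using odd by blast
qed

lemma pow2_dvd_uminus:
  assumes "pow2_dvd e x"
  shows "pow2_dvd e (- x)"
proof -
  from assms obtain c a b where "odd c"
    and x: "of_int c * x = 2 ^ e * (of_int a + \<i> * of_int b)"
    unfolding pow2_dvd_def by blast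
  then have "of_int c * (- x) = 2 ^ e * (of_int (- a) + \<i> * of_int (- b))"
    by (simp add: algebra_simps)
  with \<open>odd c\<close> show ?thesis
    unfolding pow2_dvd_def by blast
qed

lemma pow2_dvd_mult:
  assumes "pow2_dvd e x" "pow2_dvd f y"
  shows "pow2_dvd (e + f) (x * y)"
proof -
  from assms obtain c a b c' a' b' where "odd c" "odd c'"
    and x: "of_int c * x = 2 ^ e * (of_int a + \<i> * of_int b)"
    and y: "of_int c' * y = 2 ^ f * (of_int a' + \<i> * of_int b')"
    unfolding pow2_dvd_def by blast
  have odd: "odd (c * c')"
    using \<open>odd c\<close> \<open>odd c'\<close> by simp
  have "of_int (c * c') * (x * y) = (of_int c * x) * (of_int c' * y)"
    by (simp add: algebra_simps)
  also have "\<dots> = 2 ^ (e + f) * (of_int (a * a' - b * b') + \<i> * of_int (a * b' + a' * b))"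
    unfolding x y by (simp add: algebra_simps power_add)
  finally show ?thesis
    unfolding pow2_dvd_def using odd by blast
qed

lemma pow2_dvd_mono:
  assumes "pow2_dvd f x" "e \<le> f"
  shows "pow2_dvd e x"
proof -
  from assms obtain c a b where "odd c"
    and x: "of_int c * x = 2 ^ f * (of_int a + \<i> * of_int b)"
    unfolding pow2_dvd_def by blast
  have "(2 :: complex) ^ f = 2 ^ e * of_int (2 ^ (f - e))"
    using \<open>e \<le> f\<close> by (simp flip: power_add)
  with x have "of_int c * x = 2 ^ e * (of_int (2 ^ (f - e) * a) + \<i> * of_int (2 ^ (f - e) * b))"
    by (simp add: algebra_simps)
  then show ?thesis
    unfolding pow2_dvd_def using \<open>odd c\<close> by blast
qed

lemma pow2_dvd_double:
  assumes "pow2_dvd e x"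
  shows "pow2_dvd (Suc e) (2 * x)"
proof -
  from assms obtain c a b where "odd c"
    and x: "of_int c * x = 2 ^ e * (of_int a + \<i> * of_int b)"
    unfolding pow2_dvd_def by blast
  have "of_int c * (2 * x) = 2 * (of_int c * x)"
    by simp
  also have "\<dots> = 2 ^ Suc e * (of_int a + \<i> * of_int b)"
    unfolding x by simp
  finally have "of_int c * (2 * x) = 2 ^ Suc e * (of_int a + \<i> * of_int b)" .
  with \<open>odd c\<close> show ?thesis
    unfolding pow2_dvd_def by blast
qed

lemma pow2_dvd_divide_odd:
  assumes "pow2_dvd e x" "odd c"
  shows "pow2_dvd e (x / of_int c)"
proof -
  from assms(1) obtain c' a b where "odd c'"
    and x: "of_int c' * x = 2 ^ e * (of_int a + \<i> * of_int b)"
    unfolding pow2_dvd_def by blast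
  have "of_int c \<noteq> (0 :: complex)"
    using \<open>odd c\<close> by auto
  with x have "of_int (c' * c) * (x / of_int c) = 2 ^ e * (of_int a + \<i> * of_int b)"
    by simp
  moreover have "odd (c' * c)"
    using \<open>odd c\<close> \<open>odd c'\<close> by simp
  ultimately show ?thesis
    unfolding pow2_dvd_def by blast
qed

lemma pow2_dvd_zero: "pow2_dvd e 0"
  using pow2_dvd_gauss_int_iff[of e 0 0] by simp

lemma pow2_dvd_sum: "(\<And>k. k \<in> K \<Longrightarrow> pow2_dvd e (f k)) \<Longrightarrow> pow2_dvd e (\<Sum>k\<in>K. f k)"
  by (induction K rule: infinite_finite_induct) (auto intro: pow2_dvd_zero pow2_dvd_add)

lemma pow2_dvd_power: "pow2_dvd e x \<Longrightarrow> pow2_dvd (k * e) (x ^ k)"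
proof (induction k)
  case 0
  show ?case
    using pow2_dvd_gauss_int_iff[of 0 1 0] by simp
next
  case (Suc k)
  then show ?case
    using pow2_dvd_mult[of e x "k * e" "x ^ k"] by (simp add: add.commute)
qed

lemma pow2_dvd_diff_square:
  assumes "pow2_dvd e (x - y)" "1 \<le> e" "pow2_dvd 0 y"
  shows "pow2_dvd (Suc e) (x\<^sup>2 - y\<^sup>2)"
proof -
  have "pow2_dvd 1 (2 * y)"
    using pow2_dvd_double[OF assms(3)] by simp
  with pow2_dvd_mono[OF assms(1,2)] have "pow2_dvd 1 ((x - y) + 2 * y)"
    by (rule pow2_dvd_add)
  then have "pow2_dvd 1 (x + y)"
    by (simp add: algebra_simps)
  from pow2_dvd_mult[OF assms(1) this] have "pow2_dvd (e + 1) ((x - y) * (x + y))" .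
  moreover have "(x - y) * (x + y) = x\<^sup>2 - y\<^sup>2"
    by (simp add: power2_eq_square algebra_simps)
  ultimately show ?thesis
    by simp
qed

lemma pow2_dvd_diff_iterated_squares:
  assumes "pow2_dvd 1 (x - y)" "pow2_dvd 0 y"
  shows "pow2_dvd (Suc j) (x ^ 2 ^ j - y ^ 2 ^ j)"
proof (induction j)
  case 0
  show ?case using assms(1) by simp
next
  case (Suc j)
  have "pow2_dvd 0 (y ^ 2 ^ j)"
    using pow2_dvd_power[OF assms(2)] by simp
  from pow2_dvd_diff_square[OF Suc.IH _ this] show ?case
    by (simp add: power_mult[symmetric] mult.commute)
qed

lemma odd_square_mod_4: "odd (x :: int) \<Longrightarrow> x\<^sup>2 mod 4 = 1"
proof -
  assume "odd x"
  then obtain k where "x = 2 * k + 1"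
    by (auto elim: oddE)
  then have "x\<^sup>2 = 4 * (k\<^sup>2 + k) + 1"
    by (simp add: power2_eq_square algebra_simps)
  then have "x\<^sup>2 mod 4 = 1 mod 4"
    by (metis mod_mult_self4)
  then show ?thesis
    by simp
qed

lemma even_if_sum_squares_eq_even_square:
  fixes P Q C :: int
  assumes "P\<^sup>2 + Q\<^sup>2 = C\<^sup>2" "even C"
  shows "even P \<and> even Q"
proof -
  have "4 dvd P\<^sup>2 + Q\<^sup>2"
    using assms by (auto simp: power2_eq_square)
  moreover have "(P\<^sup>2 + Q\<^sup>2) mod 4 = 2" if "odd P" "odd Q"
    using odd_square_mod_4[OF that(1)] odd_square_mod_4[OF that(2)] by (simp add: mod_add_eq[symmetric])
  moreover have "even P \<longleftrightarrow> even Q"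
    using assms by (metis even_add even_power zero_less_numeral)
  ultimately show ?thesis
    by force
qed

lemma sum_squares_quotient_cong_1_or_i:
  fixes P Q C :: int
  assumes "P\<^sup>2 + Q\<^sup>2 = C\<^sup>2" "C \<noteq> 0"
  shows "pow2_dvd 1 ((of_int P + \<i> * of_int Q) / of_int C - 1) \<or>
    pow2_dvd 1 ((of_int P + \<i> * of_int Q) / of_int C - \<i>)"
  using assms
proof (induction "nat \<bar>C\<bar>" arbitrary: P Q C rule: less_induct)
  case less
  show ?case
  proof (cases "even C")
    case True
    with less.prems(1) have "even P" "even Q"
      using even_if_sum_squares_eq_even_square by blast+
    with \<open>even C\<close> obtain P' Q' C' where PQC: "P = 2 * P'" "Q = 2 * Q'" "C = 2 * C'"
      by (auto elim!: evenE)
    have "P'\<^sup>2 + Q'\<^sup>2 = C'\<^sup>2" "C' \<noteq> 0" "nat \<bar>C'\<bar> < nat \<bar>C\<bar>"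
      using less.prems unfolding PQC by (auto simp: power_mult_distrib)
    moreover have "(of_int P + \<i> * of_int Q) / of_int C = (of_int P' + \<i> * of_int Q') / (of_int C' :: complex)"
    proof -
      have "of_int P + \<i> * of_int Q = 2 * (of_int P' + \<i> * (of_int Q' :: complex))"
        "of_int C = 2 * (of_int C' :: complex)"
        unfolding PQC by (simp_all add: algebra_simps)
      then show ?thesis
        by (metis mult_divide_mult_cancel_left zero_neq_numeral)
    qed
    ultimately show ?thesis
      using less.hyps by presburger
  next
    case False
    have C: "of_int C \<noteq> (0 :: complex)"
      using less.prems(2) by simp
    have "odd (P\<^sup>2 + Q\<^sup>2)"
      using less.prems(1) False by simp
    then consider "odd P" "even Q" | "even P" "odd Q"
      by fastforce
    then show ?thesis
    proof cases
      case 1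
      then have "pow2_dvd 1 ((of_int (P - C) + \<i> * of_int Q) / of_int C)"
        using False by (intro pow2_dvd_divide_odd) (simp_all add: pow2_dvd_gauss_int_iff del: of_int_diff)
      moreover have "(of_int (P - C) + \<i> * of_int Q) / of_int C
          = (of_int P + \<i> * of_int Q) / of_int C - (1 :: complex)"
        using C by (simp add: field_simps)
      ultimately show ?thesis
        by metis
    next
      case 2
      then have "pow2_dvd 1 ((of_int P + \<i> * of_int (Q - C)) / of_int C)"
        using False by (intro pow2_dvd_divide_odd) (simp_all add: pow2_dvd_gauss_int_iff del: of_int_diff)
      moreover have "(of_int P + \<i> * of_int (Q - C)) / of_int C
          = (of_int P + \<i> * of_int Q) / of_int C - \<i>"
        using C by (simp add: field_simps)
      ultimately show ?thesis
        by metis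
    qed
  qed
qed

lemma gauss_rat_eq_sum_squares_quotient:
  assumes "w \<in> gauss_rat" "cmod w = 1"
  obtains P Q C :: int where "P\<^sup>2 + Q\<^sup>2 = C\<^sup>2" "C \<noteq> 0"
    "w = (of_int P + \<i> * of_int Q) / of_int C"
proof -
  obtain p q where "q > 0" and Re: "Re w = of_int p / of_int q"
    using assms(1) unfolding gauss_rat_def by (auto elim: Rats_cases')
  obtain p' q' where "q' > 0" and Im: "Im w = of_int p' / of_int q'"
    using assms(1) unfolding gauss_rat_def by (auto elim: Rats_cases')
  have "(Re w)\<^sup>2 + (Im w)\<^sup>2 = 1"
    using assms(2) cmod_power2[of w] by simp
  then have "real_of_int ((p * q')\<^sup>2 + (p' * q)\<^sup>2) = of_int ((q * q')\<^sup>2)"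
    using \<open>q > 0\<close> \<open>q' > 0\<close> unfolding Re Im by (simp add: field_simps power2_eq_square)
  then have "(p * q')\<^sup>2 + (p' * q)\<^sup>2 = (q * q')\<^sup>2"
    by (simp only: of_int_eq_iff)
  moreover have "w = (of_int (p * q') + \<i> * of_int (p' * q)) / of_int (q * q')"
    using \<open>q > 0\<close> \<open>q' > 0\<close> Re Im by (simp add: complex_eq_iff)
  moreover have "q * q' \<noteq> 0"
    using \<open>q > 0\<close> \<open>q' > 0\<close> by simp
  ultimately show ?thesis
    using that by blast
qed

lemma unit_gauss_rat_cong_1_or_i:
  assumes "w \<in> gauss_rat" "cmod w = 1"
  shows "pow2_dvd 1 (w - 1) \<or> pow2_dvd 1 (w - \<i>)"
  using gauss_rat_eq_sum_squares_quotient[OF assms] sum_squares_quotient_cong_1_or_i by metis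

lemma power_sums_cong_of_cong_1_or_i:
  assumes "finite K" "T \<subseteq> K"
    and "\<And>k. k \<in> K - T \<Longrightarrow> pow2_dvd 1 (w k - 1)" "\<And>k. k \<in> T \<Longrightarrow> pow2_dvd 1 (w k - \<i>)"
  shows "pow2_dvd (Suc j)
    ((\<Sum>k\<in>K. w k ^ 2 ^ j) - (of_nat (card (K - T)) + \<i> ^ 2 ^ j * of_nat (card T)))"
proof -
  define u where "u k = (if k \<in> T then \<i> else 1)" for k
  have "pow2_dvd 0 (u k)" for k
    using pow2_dvd_gauss_int_iff[of 0 0 1] pow2_dvd_gauss_int_iff[of 0 1 0] by (simp add: u_def)
  moreover have "pow2_dvd 1 (w k - u k)" if "k \<in> K" for k
    using assms(3,4) that by (auto simp: u_def)
  ultimately have "pow2_dvd (Suc j) (w k ^ 2 ^ j - u k ^ 2 ^ j)" if "k \<in> K" for k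
    using that by (blast intro: pow2_dvd_diff_iterated_squares)
  then have "pow2_dvd (Suc j) ((\<Sum>k\<in>K. w k ^ 2 ^ j) - (\<Sum>k\<in>K. u k ^ 2 ^ j))"
    by (simp add: pow2_dvd_sum flip: sum_subtractf)
  moreover have "(\<Sum>k\<in>K. u k ^ 2 ^ j) = (\<Sum>k\<in>K - T. u k ^ 2 ^ j) + (\<Sum>k\<in>T. u k ^ 2 ^ j)"
    using assms(2,1) by (rule sum.subset_diff)
  ultimately show ?thesis
    by (simp add: u_def mult.commute)
qed

lemma pow2_dvd_of_i_power_sums:
  fixes r t :: nat
  assumes "\<And>j. j \<le> s \<Longrightarrow> pow2_dvd (Suc j) (of_nat r + \<i> ^ 2 ^ j * of_nat t)"
  shows "2 ^ Suc s dvd r + t"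
proof -
  have "pow2_dvd 1 (of_int (int r) + \<i> * of_int (int t))"
    using assms[of 0] by simp
  then have "even r" "even t"
    unfolding pow2_dvd_gauss_int_iff by simp_all
  consider "s = 0" | "s = 1" | "s \<ge> 2"
    by linarith
  then show ?thesis
  proof cases
    case 1
    with \<open>even r\<close> \<open>even t\<close> show ?thesis
      by simp
  next
    case 2
    have "pow2_dvd 2 (of_int (int r - int t) + \<i> * of_int 0)"
      using assms[of 1] 2 by (simp add: numeral_2_eq_2)
    then have "4 dvd int r - int t"
      unfolding pow2_dvd_gauss_int_iff by simp
    with \<open>even t\<close> have "4 dvd r + t"
      by presburger
    with 2 show ?thesis
      by simp
  next
    case 3
    then obtain k where "s = Suc (Suc k)"
      using add_2_eq_Suc le_Suc_ex by blast
    then have "\<i> ^ 2 ^ s = 1"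
      by simp
    then have "pow2_dvd (Suc s) (of_int (int (r + t)) + \<i> * of_int 0)"
      using assms[of s] by simp
    then have "2 ^ Suc s dvd int (r + t)"
      unfolding pow2_dvd_gauss_int_iff by simp
    then show ?thesis
      by (metis of_nat_dvd_iff of_nat_numeral of_nat_power)
  qed
qed

lemma pow2_dvd_card_if_unit_power_sums_vanish:
  assumes "finite K"
    and "\<And>k. k \<in> K \<Longrightarrow> w k \<in> gauss_rat" "\<And>k. k \<in> K \<Longrightarrow> cmod (w k) = 1"
    and "\<And>j. j \<le> s \<Longrightarrow> (\<Sum>k\<in>K. w k ^ 2 ^ j) = 0"
  shows "2 ^ Suc s dvd card K"
proof -
  define T where "T = {k \<in> K. \<not> pow2_dvd 1 (w k - 1)}"
  have "T \<subseteq> K"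
    by (auto simp: T_def)
  have "pow2_dvd 1 (w k - \<i>)" if "k \<in> T" for k
    using unit_gauss_rat_cong_1_or_i[OF assms(2,3)] that by (auto simp: T_def)
  then have cong: "pow2_dvd (Suc j)
      ((\<Sum>k\<in>K. w k ^ 2 ^ j) - (of_nat (card (K - T)) + \<i> ^ 2 ^ j * of_nat (card T)))" for j
    using assms(1) \<open>T \<subseteq> K\<close> by (intro power_sums_cong_of_cong_1_or_i) (auto simp: T_def)
  have "pow2_dvd (Suc j) (of_nat (card (K - T)) + \<i> ^ 2 ^ j * of_nat (card T))" if "j \<le> s" for j
    using pow2_dvd_uminus[OF cong[of j]] assms(4)[OF that] by (simp add: add.commute)
  then have "2 ^ Suc s dvd card (K - T) + card T"
    by (rule pow2_dvd_of_i_power_sums)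
  moreover have "card (K - T) + card T = card K"
    using \<open>T \<subseteq> K\<close> \<open>finite K\<close> card_mono[of K T] by (simp add: card_Diff_subset finite_subset)
  ultimately show ?thesis
    by simp
qed

lemma gauss_rat_divide: "x \<in> gauss_rat \<Longrightarrow> y \<in> gauss_rat \<Longrightarrow> x / y \<in> gauss_rat"
  unfolding gauss_rat_def by (simp add: Re_divide Im_divide)

theorem theorem1p5:
  fixes z :: "nat \<Rightarrow> complex" and n s m :: nat
  assumes "\<forall>k\<in>{1..n}. z k \<in> gauss_rat"
    and "\<forall>k\<in>{1..n}. z k \<noteq> 0"
    and "\<forall>j\<in>{1..n}. \<forall>k\<in>{1..n}. cmod (z j) = cmod (z k)"
    and "n = 2 ^ s * m" and "odd m"
  shows "\<exists>j\<in>{0..s}. (\<Sum>k=1..n. z k ^ (2 ^ j)) \<noteq> 0"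
proof (rule ccontr)
  assume "\<not> ?thesis"
  then have vanish: "(\<Sum>k=1..n. z k ^ 2 ^ j) = 0" if "j \<le> s" for j
    using that by auto
  have "1 \<in> {1..n}"
    using assms(4) odd_pos[OF assms(5)] by simp
  then have "z 1 \<in> gauss_rat" "z 1 \<noteq> 0"
    using assms(1,2) by auto
  define w where "w k = z k / z 1" for k
  have "2 ^ Suc s dvd card {1..n}"
  proof (rule pow2_dvd_card_if_unit_power_sums_vanish)
    show "w k \<in> gauss_rat" if "k \<in> {1..n}" for k
      unfolding w_def using assms(1) that \<open>z 1 \<in> gauss_rat\<close> by (simp add: gauss_rat_divide)
    show "cmod (w k) = 1" if "k \<in> {1..n}" for k
    proof -
      have "cmod (z k) = cmod (z 1)"
        using assms(3) that \<open>1 \<in> {1..n}\<close> by blast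
      with \<open>z 1 \<noteq> 0\<close> show ?thesis
        unfolding w_def by (simp add: norm_divide)
    qed
    show "(\<Sum>k=1..n. w k ^ 2 ^ j) = 0" if "j \<le> s" for j
      unfolding w_def using vanish[OF that] by (simp add: power_divide flip: sum_divide_distrib)
  qed simp
  then have "2 ^ s * 2 dvd 2 ^ s * m"
    using assms(4) by (simp add: mult.commute)
  with assms(5) show False
    by simp
qed

end
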